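(* Let $A_1,\ldots,A_k$ and $B_1,\ldots,B_k$ be $n\times n$ Hermitian matrices with $mI\le A_i,B_i\le MI$ for $i=1,\ldots,k$ and some scalars $0<m<M$, and let $\Phi_1,\ldots,\Phi_k:\mathscr{M}_n\to\mathscr{M}_r$ be positive linear maps with $\sum_{i=1}^k\Phi_i(I)=I$. Then $$\left(\sum_{i=1}^k\Phi_i(A_i^2)\right)^{1/2}+\left(\sum_{i=1}^k\Phi_i(B_i^2)\right)^{1/2}\le\frac{M+m}{2\sqrt{Mm}}\left(\sum_{i=1}^k\Phi_i((A_i+B_i)^2)\right)^{1/2}$$ and $$\left(\sum_{i=1}^k\Phi_i(A_i^2)\right)^{1/2}+\left(\sum_{i=1}^k\Phi_i(B_i^2)\right)^{1/2}\le\frac{(M-m)^2}{2(M+m)}I+\left(\sum_{i=1}^k\Phi_i((A_i+B_i)^2)\right)^{1/2}.$$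
   Context: $\mathscr{M}_n$ denotes the algebra of $n\times n$ complex matrices; $\le$ is the Löwner order. A linear map is positive if it maps positive semidefinite matrices to positive semidefinite matrices. *)

theory Defs
  imports "HOL-Analysis.Analysis"
begin

type_synonym 'n cmat = "complex^'n^'n"

definition adjoint_mat :: "complex^'n^'m \<Rightarrow> complex^'m^'n" where
  "adjoint_mat A = (\<chi> i j. cnj (A $ j $ i))"

definition hermitian :: "('n::finite) cmat \<Rightarrow> bool" where
  "hermitian A \<longleftrightarrow> adjoint_mat A = A"

definition qform :: "('n::finite) cmat \<Rightarrow> complex^'n \<Rightarrow> complex" where
  "qform A x = (\<Sum>i\<in>UNIV. cnj (x $ i) * (A *v x) $ i)"

definition psd :: "('n::finite) cmat \<Rightarrow> bool" where
  "psd A \<longleftrightarrow> (\<forall>x. Im (qform A x) = 0 \<and> Re (qform A x) \<ge> 0)"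

definition loewner_le :: "('n::finite) cmat \<Rightarrow> 'n cmat \<Rightarrow> bool" (infix "\<le>\<^sub>L" 50) where
  "A \<le>\<^sub>L B \<longleftrightarrow> psd (B - A)"

definition cmat_scale :: "complex \<Rightarrow> complex^'n^'m \<Rightarrow> complex^'n^'m" (infixr "*\<^sub>M" 75) where
  "c *\<^sub>M A = (\<chi> i j. c * A $ i $ j)"

definition msqrt :: "('n::finite) cmat \<Rightarrow> 'n cmat" where
  "msqrt X = (THE S. psd S \<and> S ** S = X)"

definition clinear_map :: "(('n::finite) cmat \<Rightarrow> ('r::finite) cmat) \<Rightarrow> bool" where
  "clinear_map \<Phi> \<longleftrightarrow> (\<forall>X Y. \<Phi> (X + Y) = \<Phi> X + \<Phi> Y) \<and> (\<forall>c X. \<Phi> (c *\<^sub>M X) = c *\<^sub>M \<Phi> X)"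

definition positive_map :: "(('n::finite) cmat \<Rightarrow> ('r::finite) cmat) \<Rightarrow> bool" where
  "positive_map \<Phi> \<longleftrightarrow> (\<forall>X. psd X \<longrightarrow> psd (\<Phi> X))"

end

(* By the spectral theorem, for Hermitian X_i the matrices sum_i Phi_i(X_i) and sum_i Phi_i(X_i^2)
   are sum_j l_j Q_j and sum_j l_j^2 Q_j, where Q_j = Phi_i(P_u) for the projections P_u onto unit
   eigenvectors u of the X_i (so the Q_j are positive and sum to I) and the l_j are the corresponding
   eigenvalues.  Taking X_i = A_i + B_i gives Kadison's inequality (a + b)^2 <= R for
   a = sum Phi_i(A_i), b = sum Phi_i(B_i), R = sum Phi_i((A_i + B_i)^2), hence a + b <= R^(1/2).
   Taking X_i = A_i, the bounds m <= l_j <= M give (M - l_j)(l_j - m) >= 0, i.e.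
   P = sum Phi_i(A_i^2) <= (M + m) a - M m I, and completing a square bounds the right-hand side
   both by (c a)^2 with c = (M + m)/(2 sqrt(M m)) and by (a + g I)^2 with g = (M - m)^2/(4 (M + m)).
   As the square root is operator monotone, P^(1/2) <= c a and P^(1/2) <= a + g I; adding these
   bounds for A and B and using a + b <= R^(1/2) yields both inequalities. *)

theory Submission
  imports Defs
begin

section \<open>Inner product, quadratic forms and the Loewner order\<close>

definition cinner :: "complex^'n::finite \<Rightarrow> complex^'n \<Rightarrow> complex" where
  "cinner x y = (\<Sum>i\<in>UNIV. cnj (x$i) * y$i)"

definition outer :: "complex^'n::finite \<Rightarrow> complex^'n \<Rightarrow> complex^'n^'n" where
  "outer u v = (\<chi> i j. u$i * cnj (v$j))"

lemma qform_eq_cinner: "qform A x = cinner x (A *v x)"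
  by (simp add: qform_def cinner_def)

lemma cinner_add_left: "cinner (x + y) z = cinner x z + cinner y z"
  by (simp add: cinner_def distrib_right sum.distrib)

lemma cinner_add_right: "cinner z (x + y) = cinner z x + cinner z y"
  by (simp add: cinner_def distrib_left sum.distrib)

lemma cinner_diff_left: "cinner (x - y) z = cinner x z - cinner y z"
  by (simp add: cinner_def left_diff_distrib sum_subtractf)

lemma cinner_diff_right: "cinner z (x - y) = cinner z x - cinner z y"
  by (simp add: cinner_def right_diff_distrib sum_subtractf)

lemma cinner_scale_left: "cinner (c *s x) y = cnj c * cinner x y"
  by (simp add: cinner_def sum_distrib_left mult.assoc)

lemma cinner_scale_right: "cinner x (c *s y) = c * cinner x y"
  by (simp add: cinner_def sum_distrib_left mult.left_commute)

lemma cinner_zero_right [simp]: "cinner x 0 = 0"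
  by (simp add: cinner_def)

lemma cinner_sum_right: "cinner x (sum f S) = (\<Sum>j\<in>S. cinner x (f j))"
  by (induction S rule: infinite_finite_induct) (auto simp: cinner_add_right)

lemma cnj_cinner: "cnj (cinner x y) = cinner y x"
  by (simp add: cinner_def mult.commute)

lemma cinner_self: "cinner x x = complex_of_real ((norm x)^2)"
proof -
  have "(norm x)^2 = (\<Sum>i\<in>UNIV. x$i \<bullet> x$i)"
    by (simp add: power2_norm_eq_inner inner_vec_def)
  moreover have "cnj (x$i) * x$i = complex_of_real (x$i \<bullet> x$i)" for i
    by (simp add: inner_complex_def complex_eq_iff)
  ultimately show ?thesis by (simp add: cinner_def)
qed

lemma inner_eq_Re_cinner: "x \<bullet> y = Re (cinner x y)"
  by (simp add: cinner_def inner_vec_def inner_complex_def Re_sum)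

lemma cinner_matrix_vector: "cinner x (A *v y) = cinner (adjoint_mat A *v x) y"
proof -
  have "cinner x (A *v y) = (\<Sum>i\<in>UNIV. \<Sum>j\<in>UNIV. cnj (x$i) * (A$i$j * y$j))"
    by (simp add: cinner_def matrix_vector_mult_def sum_distrib_left)
  also have "\<dots> = (\<Sum>j\<in>UNIV. \<Sum>i\<in>UNIV. cnj (x$i) * (A$i$j * y$j))"
    by (rule sum.swap)
  also have "\<dots> = cinner (adjoint_mat A *v x) y"
    by (simp add: cinner_def matrix_vector_mult_def adjoint_mat_def sum_distrib_right
        sum_distrib_left mult_ac)
  finally show ?thesis .
qed

lemma hermitian_cinner: "hermitian A \<Longrightarrow> cinner x (A *v y) = cinner (A *v x) y"
  by (simp add: hermitian_def cinner_matrix_vector)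

lemma matrix_vector_mult_scale: "(A::complex^'n^'m) *v (c *s x) = c *s (A *v x)"
  by (simp add: vec_eq_iff matrix_vector_mult_def sum_distrib_left mult.left_commute)

lemma matrix_vector_sum: "(A::complex^'n^'m) *v sum f S = (\<Sum>j\<in>S. A *v f j)"
  by (induction S rule: infinite_finite_induct) (auto simp: matrix_vector_right_distrib)

lemma sum_matrix_vector: "sum f S *v (x::complex^'n) = (\<Sum>j\<in>S. f j *v x)"
  by (induction S rule: infinite_finite_induct) (auto simp: matrix_vector_mult_add_rdistrib)

lemma cmat_scale_matrix_vector: "(c *\<^sub>M A) *v x = c *s (A *v (x::complex^'n))"
  by (simp add: cmat_scale_def vec_eq_iff matrix_vector_mult_def sum_distrib_left mult.assoc)

lemma mat_matrix_vector: "mat c *v x = c *s (x::complex^'n::finite)"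
  by (simp add: mat_def matrix_vector_mult_def vec_eq_iff if_distrib if_distribR
      cong del: if_weak_cong)

lemma cmat_scale_add_right: "c *\<^sub>M (X + Y) = c *\<^sub>M X + c *\<^sub>M Y"
  by (simp add: cmat_scale_def vec_eq_iff algebra_simps)

lemma cmat_scale_diff_right: "c *\<^sub>M (X - Y) = c *\<^sub>M X - c *\<^sub>M Y"
  by (simp add: cmat_scale_def vec_eq_iff algebra_simps)

lemma cmat_scale_zero: "0 *\<^sub>M A = 0"
  by (simp add: cmat_scale_def vec_eq_iff)

lemma cmat_scale_one: "1 *\<^sub>M A = A"
  by (simp add: cmat_scale_def vec_eq_iff)

lemma mat_add: "mat (a + b) = mat a + (mat b :: ('a::semiring_1)^'n^'n)"
  by (simp add: mat_def vec_eq_iff)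

lemma qform_add: "qform (A + B) x = qform A x + qform B x"
  by (simp add: qform_eq_cinner matrix_vector_mult_add_rdistrib cinner_add_right)

lemma qform_diff: "qform (A - B) x = qform A x - qform B x"
  by (simp add: qform_eq_cinner matrix_vector_mult_diff_rdistrib cinner_diff_right)

lemma qform_scale: "qform (c *\<^sub>M A) x = c * qform A x"
  by (simp add: qform_eq_cinner cmat_scale_matrix_vector cinner_scale_right)

lemma qform_mat: "qform (mat c) x = c * cinner x x"
  by (simp add: qform_eq_cinner mat_matrix_vector cinner_scale_right)

lemma qform_sum: "qform (sum f S) x = (\<Sum>j\<in>S. qform (f j) x)"
  by (simp add: qform_eq_cinner sum_matrix_vector cinner_sum_right)

lemma qform_mult: "qform (A ** B) x = cinner x (A *v (B *v x))"
  by (simp add: qform_eq_cinner matrix_vector_mul_assoc)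

lemma scaleR_eq_scale: "r *\<^sub>R (x::complex^'n) = complex_of_real r *s x"
  by (simp add: vec_eq_iff scaleR_conv_of_real[where 'a=complex])

lemma cinner_scaleR_right: "cinner x (r *\<^sub>R y) = complex_of_real r * cinner x y"
  by (simp add: scaleR_eq_scale cinner_scale_right)

lemma qform_scaleR: "qform H (r *\<^sub>R w) = complex_of_real (r^2) * qform H w"
  by (simp add: qform_eq_cinner scaleR_eq_scale matrix_vector_mult_scale cinner_scale_left
      cinner_scale_right power2_eq_square)

lemma qform_eq_0_imp_eq_0:
  assumes "\<And>x. qform K x = 0"
  shows "K = 0"
proof -
  have polar: "cinner x (K *v y) = 0" for x y
  proof -
    have sym: "cinner x (K *v y) + cinner y (K *v x) = 0"
      using assms[of "x + y"] assms[of x] assms[of y]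
      by (simp add: qform_eq_cinner cinner_add_left cinner_add_right matrix_vector_right_distrib
          add.commute)
    have "cinner (\<i> *s x) (K *v y) + cinner y (K *v (\<i> *s x)) = 0"
      using assms[of "\<i> *s x + y"] assms[of "\<i> *s x"] assms[of y]
      by (simp add: qform_eq_cinner cinner_add_left cinner_add_right matrix_vector_right_distrib
          add.commute)
    then have "\<i> * (cinner y (K *v x) - cinner x (K *v y)) = 0"
      by (simp add: cinner_scale_left cinner_scale_right matrix_vector_mult_scale
          right_diff_distrib)
    then have "cinner y (K *v x) = cinner x (K *v y)" by simp
    with sym show ?thesis by simp
  qed
  have "K *v y = 0" for y
    using polar[of "K *v y" y] by (simp add: cinner_self)
  then show ?thesis by (simp add: matrix_eq)
qed

lemma matrix_eq_iff_qform: "A = B \<longleftrightarrow> (\<forall>x. qform A x = qform B x)"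
  using qform_eq_0_imp_eq_0[of "A - B"] by (auto simp: qform_diff)

lemma hermitian_iff_qform_real: "hermitian A \<longleftrightarrow> (\<forall>x. Im (qform A x) = 0)"
proof
  assume "hermitian A"
  then have "cnj (qform A x) = qform A x" for x
    by (simp add: qform_eq_cinner cnj_cinner hermitian_cinner)
  from arg_cong[OF this, of Im] show "\<forall>x. Im (qform A x) = 0"
    by simp
next
  assume real: "\<forall>x. Im (qform A x) = 0"
  have "qform (adjoint_mat A) x = qform A x" for x
  proof -
    have "qform (adjoint_mat A) x = cnj (qform A x)"
      by (simp add: qform_eq_cinner cinner_matrix_vector cnj_cinner)
    then show ?thesis using real by (simp add: complex_eq_iff)
  qed
  then show "hermitian A" by (simp add: hermitian_def matrix_eq_iff_qform)
qed

lemma hermitian_add: "hermitian A \<Longrightarrow> hermitian B \<Longrightarrow> hermitian (A + B)"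
  by (simp add: hermitian_iff_qform_real qform_add)

lemma hermitian_diff: "hermitian A \<Longrightarrow> hermitian B \<Longrightarrow> hermitian (A - B)"
  by (simp add: hermitian_iff_qform_real qform_diff)

lemma hermitian_mat: "hermitian (mat (complex_of_real c))"
  by (simp add: hermitian_iff_qform_real qform_mat cinner_self)

lemma psd_imp_hermitian: "psd A \<Longrightarrow> hermitian A"
  by (simp add: psd_def hermitian_iff_qform_real)

lemma psd_qform_real: "psd A \<Longrightarrow> qform A x = complex_of_real (Re (qform A x))"
  by (simp add: psd_def complex_eq_iff)

lemma psd_if_qform_cinner_self: "(\<And>x. qform K x = cinner (f x) (f x)) \<Longrightarrow> psd K"
  by (simp add: psd_def cinner_self)

lemma psd_add: "psd A \<Longrightarrow> psd B \<Longrightarrow> psd (A + B)"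
  by (simp add: psd_def qform_add)

lemma psd_sum: "(\<And>j. j \<in> S \<Longrightarrow> psd (f j)) \<Longrightarrow> psd (sum f S)"
  by (simp add: psd_def qform_sum Re_sum Im_sum sum_nonneg)

lemma psd_scale: "0 \<le> c \<Longrightarrow> psd A \<Longrightarrow> psd (complex_of_real c *\<^sub>M A)"
  by (simp add: psd_def qform_scale)

lemma psd_mat: "0 \<le> c \<Longrightarrow> psd (mat (complex_of_real c))"
  by (simp add: psd_def qform_mat cinner_self)

lemma psd_square: "hermitian K \<Longrightarrow> psd (K ** K)"
  by (rule psd_if_qform_cinner_self[of _ "\<lambda>x. K *v x"]) (simp add: qform_mult hermitian_cinner)

lemma outer_matrix_vector: "outer u u *v x = cinner u x *s u"
  by (simp add: vec_eq_iff matrix_vector_mult_def outer_def cinner_def sum_distrib_left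
      sum_distrib_right mult_ac)

lemma qform_outer: "qform (outer u u) x = complex_of_real ((cmod (cinner u x))^2)"
proof -
  have "qform (outer u u) x = cinner u x * cnj (cinner u x)"
    by (simp add: qform_eq_cinner outer_matrix_vector cinner_scale_right cnj_cinner)
  then show ?thesis by (simp only: complex_norm_square)
qed

lemma psd_outer: "psd (outer u u)"
  by (simp add: psd_def qform_outer)

lemma loewner_le_refl: "A \<le>\<^sub>L A"
  by (simp add: loewner_le_def psd_def qform_eq_cinner)

lemma loewner_le_trans [trans]: "A \<le>\<^sub>L B \<Longrightarrow> B \<le>\<^sub>L C \<Longrightarrow> A \<le>\<^sub>L C"
  using psd_add[of "C - B" "B - A"] by (simp add: loewner_le_def)

lemma loewner_le_antisym: "A \<le>\<^sub>L B \<Longrightarrow> B \<le>\<^sub>L A \<Longrightarrow> A = B"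
  by (auto simp: loewner_le_def psd_def matrix_eq_iff_qform qform_diff complex_eq_iff
      intro: order_antisym)

lemma loewner_add_mono: "A \<le>\<^sub>L B \<Longrightarrow> C \<le>\<^sub>L D \<Longrightarrow> A + C \<le>\<^sub>L B + D"
  using psd_add[of "B - A" "D - C"] by (simp add: loewner_le_def algebra_simps)

lemma loewner_scale_mono:
  "0 \<le> c \<Longrightarrow> A \<le>\<^sub>L B \<Longrightarrow> complex_of_real c *\<^sub>M A \<le>\<^sub>L complex_of_real c *\<^sub>M B"
  using psd_scale[of c "B - A"] by (simp add: loewner_le_def cmat_scale_diff_right)

lemma hermitian_if_mat_le: "mat (complex_of_real m) \<le>\<^sub>L X \<Longrightarrow> hermitian X"
  using hermitian_add[OF psd_imp_hermitian hermitian_mat, of "X - mat (complex_of_real m)" m]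
  by (simp add: loewner_le_def)

lemma psd_if_mat_le: "0 \<le> m \<Longrightarrow> mat (complex_of_real m) \<le>\<^sub>L X \<Longrightarrow> psd X"
  using psd_add[OF _ psd_mat, of "X - mat (complex_of_real m)" m] by (simp add: loewner_le_def)

lemma qform_between_mat_bounds:
  assumes "cinner u u = 1" "mat (complex_of_real m) \<le>\<^sub>L X" "X \<le>\<^sub>L mat (complex_of_real M)"
  shows "m \<le> Re (qform X u) \<and> Re (qform X u) \<le> M"
  using assms unfolding loewner_le_def psd_def
  by (auto simp: qform_diff qform_mat dest!: spec[of _ u])

section \<open>Spectral theorem for Hermitian matrices\<close>

definition orthonormal_set :: "(complex^'n::finite) set \<Rightarrow> bool" where
  "orthonormal_set U \<longleftrightarrow> (\<forall>u\<in>U. \<forall>w\<in>U. cinner u w = (if u = w then 1 else 0))"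

lemma orthonormal_set_finite_card:
  fixes U :: "(complex^'n::finite) set"
  assumes "orthonormal_set U"
  shows "finite U \<and> card U \<le> DIM(complex^'n)"
proof -
  have "pairwise orthogonal U"
    using assms by (auto simp: pairwise_def orthogonal_def inner_eq_Re_cinner orthonormal_set_def)
  moreover have "0 \<notin> U"
    using assms by (fastforce simp: orthonormal_set_def)
  ultimately have "independent U" by (rule pairwise_orthogonal_independent)
  then show ?thesis by (rule independent_bound)
qed

lemma orthonormal_set_insert:
  assumes "orthonormal_set U" "cinner v v = 1" "\<forall>u\<in>U. cinner u v = 0"
  shows "orthonormal_set (insert v U)"
proof -
  have "cinner v u = 0" if "u \<in> U" for u
    using assms(3) that cnj_cinner[of u v] by (metis complex_cnj_zero)
  moreover have "v \<notin> U" using assms(2,3) by auto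
  ultimately show ?thesis using assms unfolding orthonormal_set_def by auto
qed

lemma cinner_orthonormal_sum:
  assumes "orthonormal_set U" "w \<in> U"
  shows "cinner w (\<Sum>u\<in>U. c u *s u) = c w"
proof -
  have "cinner w (\<Sum>u\<in>U. c u *s u) = (\<Sum>u\<in>U. if w = u then c u else 0)"
    using assms by (intro trans[OF cinner_sum_right sum.cong])
      (auto simp: cinner_scale_right orthonormal_set_def)
  also have "\<dots> = c w"
    using assms orthonormal_set_finite_card[OF assms(1)] by simp
  finally show ?thesis .
qed

lemma qform_min_on_orthogonal_complement:
  fixes H :: "('n::finite) cmat" and x :: "complex^'n"
  assumes "x \<noteq> 0" "\<forall>u\<in>U. cinner u x = 0"
  shows "\<exists>v. norm v = 1 \<and> (\<forall>u\<in>U. cinner u v = 0) \<and>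
    (\<forall>w. (\<forall>u\<in>U. cinner u w = 0) \<longrightarrow> Re (qform H v) * (norm w)^2 \<le> Re (qform H w))"
proof -
  define W where "W = {v. \<forall>u\<in>U. cinner u v = 0}"
  have normalize: "(1 / norm w) *\<^sub>R w \<in> W \<inter> sphere 0 1" if "w \<in> W" "w \<noteq> 0" for w
    using that by (simp add: W_def cinner_scaleR_right)
  have "W = (\<Inter>u\<in>U. {v. cinner u v = 0})" by (auto simp: W_def)
  moreover have "closed {v::complex^'n. cinner u v = 0}" for u
    unfolding cinner_def by (intro closed_Collect_eq continuous_intros)
  ultimately have compact: "compact (W \<inter> sphere 0 1)" by (intro closed_Int_compact) auto
  have nonempty: "W \<inter> sphere 0 1 \<noteq> {}" using normalize[of x] assms by (auto simp: W_def)
  have "continuous_on (W \<inter> sphere 0 1) (\<lambda>v. Re (qform H v))"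
    unfolding qform_def matrix_vector_mult_def by (intro continuous_intros)
  from continuous_attains_inf[OF compact nonempty this] obtain v where v: "v \<in> W \<inter> sphere 0 1"
    and vmin: "\<And>y. y \<in> W \<inter> sphere 0 1 \<Longrightarrow> Re (qform H v) \<le> Re (qform H y)"
    by blast
  have "Re (qform H v) * (norm w)^2 \<le> Re (qform H w)" if "w \<in> W" for w
  proof (cases "w = 0")
    case True then show ?thesis by (simp add: qform_eq_cinner)
  next
    case False
    have "Re (qform H v) \<le> Re (qform H ((1 / norm w) *\<^sub>R w))"
      using vmin[OF normalize[OF that False]] .
    also have "\<dots> = Re (qform H w) / (norm w)^2"
      by (simp add: qform_scaleR power_divide)
    finally show ?thesis using False by (simp add: field_simps)
  qed
  with v show ?thesis by (auto simp: W_def)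
qed

text \<open>The form \<open>t \<mapsto> \<langle>v - t G v, G (v - t G v)\<rangle> = t\<^sup>2 \<langle>G v, G\<^sup>2 v\<rangle> - 2 t \<parallel>G v\<parallel>\<^sup>2\<close> can only be
  nonnegative for all real \<open>t\<close> if \<open>G v = 0\<close>.\<close>

lemma hermitian_kernel_if_qform_min:
  assumes herm: "hermitian G" and zero: "qform G v = 0"
    and min: "\<And>t::real. 0 \<le> Re (qform G (v - complex_of_real t *s (G *v v)))"
  shows "G *v v = 0"
proof -
  define z where "z = G *v v"
  define r where "r = Re (qform G z)"
  have "cinner v z = 0" using zero by (simp add: qform_eq_cinner z_def)
  moreover have "cinner v (G *v z) = cinner z z" by (simp add: hermitian_cinner[OF herm] z_def)
  ultimately have expand: "qform G (v - complex_of_real t *s z) =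
      (complex_of_real t)^2 * qform G z - 2 * complex_of_real t * cinner z z" for t
    by (simp add: qform_eq_cinner matrix_vector_mult_diff_distrib matrix_vector_mult_scale
        cinner_diff_left cinner_diff_right cinner_scale_left cinner_scale_right algebra_simps
        power2_eq_square flip: z_def)
  define n where "n = (norm z)^2"
  have quad: "0 \<le> t^2 * r - 2 * t * n" for t
    using min[of t] unfolding expand z_def[symmetric]
    by (simp add: r_def n_def cinner_self power2_eq_square)
  have "n = 0"
  proof (cases "r \<le> 0")
    case True
    have "2 * n \<le> r" using quad[of 1] by simp
    moreover have "0 \<le> n" by (simp add: n_def)
    ultimately show ?thesis using True by linarith
  next
    case False
    have "0 \<le> (n / r)^2 * r - 2 * (n / r) * n" by (rule quad)
    also have "\<dots> = - (n^2 / r)" using False by (simp add: power2_eq_square field_simps)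
    finally show ?thesis using False by (simp add: n_def divide_le_0_iff)
  qed
  then show ?thesis by (simp add: z_def n_def)
qed

lemma hermitian_eigenvector_orthogonal:
  fixes H :: "('n::finite) cmat"
  assumes herm: "hermitian H"
    and eig: "\<forall>u\<in>U. \<exists>l::real. H *v u = complex_of_real l *s u"
    and "x \<noteq> 0" "\<forall>u\<in>U. cinner u x = 0"
  obtains v \<mu> where "norm v = 1" "\<forall>u\<in>U. cinner u v = 0" "H *v v = complex_of_real \<mu> *s v"
proof -
  obtain v where nv: "norm v = 1" and vU: "\<forall>u\<in>U. cinner u v = 0"
    and vmin: "\<forall>w. (\<forall>u\<in>U. cinner u w = 0) \<longrightarrow> Re (qform H v) * (norm w)^2 \<le> Re (qform H w)"
    using qform_min_on_orthogonal_complement[OF assms(3,4), of H] by blast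
  define \<mu> where "\<mu> = Re (qform H v)"
  define G where "G = H - mat (complex_of_real \<mu>)"
  have qG: "qform G y = qform H y - complex_of_real (\<mu> * (norm y)^2)" for y
    by (simp add: G_def qform_diff qform_mat cinner_self)
  have hG: "hermitian G" by (simp add: G_def hermitian_diff herm hermitian_mat)
  have "qform H v = complex_of_real \<mu>"
    using herm by (simp add: hermitian_iff_qform_real complex_eq_iff \<mu>_def)
  then have Gv: "qform G v = 0" by (simp add: qG nv)
  have GvU: "cinner u (G *v v) = 0" if uU: "u \<in> U" for u
  proof -
    obtain l where "H *v u = complex_of_real l *s u" using eig uU by blast
    then have "G *v u = complex_of_real (l - \<mu>) *s u"
      by (simp add: G_def matrix_vector_mult_diff_rdistrib mat_matrix_vector vector_sub_rdistrib)
    then have "cinner (G *v u) v = 0"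
      using vU uU by (simp add: cinner_diff_left cinner_scale_left)
    then show ?thesis by (simp only: hermitian_cinner[OF hG])
  qed
  have min: "0 \<le> Re (qform G (v - complex_of_real t *s (G *v v)))" for t
  proof -
    let ?w = "v - complex_of_real t *s (G *v v)"
    have "\<forall>u\<in>U. cinner u ?w = 0"
      using vU GvU by (simp add: cinner_diff_right cinner_scale_right)
    with vmin have "\<mu> * (norm ?w)^2 \<le> Re (qform H ?w)" unfolding \<mu>_def by blast
    then show ?thesis by (simp add: qG)
  qed
  have "G *v v = 0" by (rule hermitian_kernel_if_qform_min[OF hG Gv min])
  then have "H *v v = complex_of_real \<mu> *s v"
    by (simp add: G_def matrix_vector_mult_diff_rdistrib mat_matrix_vector)
  with nv vU show thesis by (rule that)
qed

text \<open>A maximal orthonormal set of eigenvectors spans everything: otherwise the orthogonal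
  complement would contain a further unit eigenvector.\<close>

lemma hermitian_orthonormal_eigenbasis:
  fixes H :: "('n::finite) cmat"
  assumes herm: "hermitian H"
  obtains U where "orthonormal_set U" "\<forall>u\<in>U. \<exists>l::real. H *v u = complex_of_real l *s u"
    "\<And>x. (\<Sum>u\<in>U. cinner u x *s u) = x"
proof -
  let ?P = "\<lambda>U. orthonormal_set U \<and> (\<forall>u\<in>U. \<exists>l::real. H *v u = complex_of_real l *s u)"
  have "?P {}" by (simp add: orthonormal_set_def)
  moreover have "card V < Suc DIM(complex^'n)" if "?P V" for V
    using that orthonormal_set_finite_card[of V] by simp
  ultimately obtain U where U: "?P U" and max: "\<And>V. ?P V \<Longrightarrow> card V \<le> card U"
    using Lattices_Big.ex_has_greatest_nat[of ?P "{}" card "Suc DIM(complex^'n)"] by blast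
  have "(\<Sum>u\<in>U. cinner u x *s u) = x" for x
  proof (rule ccontr)
    define z where "z = x - (\<Sum>u\<in>U. cinner u x *s u)"
    assume "(\<Sum>u\<in>U. cinner u x *s u) \<noteq> x"
    then have "z \<noteq> 0" by (simp add: z_def)
    moreover have "\<forall>u\<in>U. cinner u z = 0"
      using U cinner_orthonormal_sum[of U] by (simp add: z_def cinner_diff_right)
    ultimately obtain v \<mu> where v: "norm v = 1" "\<forall>u\<in>U. cinner u v = 0"
      "H *v v = complex_of_real \<mu> *s v"
      by (rule hermitian_eigenvector_orthogonal[OF herm conjunct2[OF U]])
    have vv: "cinner v v = 1" using v by (simp add: cinner_self)
    then have "?P (insert v U)" using U v orthonormal_set_insert by blast
    then have "card (insert v U) \<le> card U" by (rule max)
    moreover have "v \<notin> U" using v vv by auto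
    ultimately show False using U orthonormal_set_finite_card[of U] by simp
  qed
  with U show thesis by (intro that) auto
qed

definition spectral_sum :: "(complex^'n::finite) set \<Rightarrow> (complex^'n \<Rightarrow> real) \<Rightarrow> 'n cmat" where
  "spectral_sum U f = (\<Sum>u\<in>U. complex_of_real (f u) *\<^sub>M outer u u)"

lemma spectral_sum_matrix_vector:
  "spectral_sum U f *v x = (\<Sum>u\<in>U. (complex_of_real (f u) * cinner u x) *s u)"
  by (simp add: spectral_sum_def sum_matrix_vector cmat_scale_matrix_vector outer_matrix_vector
      vector_smult_assoc)

lemma psd_spectral_sum: "(\<And>u. u \<in> U \<Longrightarrow> 0 \<le> f u) \<Longrightarrow> psd (spectral_sum U f)"
  unfolding spectral_sum_def by (intro psd_sum psd_scale psd_outer)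

lemma spectral_sum_mult:
  assumes "orthonormal_set U"
  shows "spectral_sum U f ** spectral_sum U g = spectral_sum U (\<lambda>u. f u * g u)"
proof -
  have "spectral_sum U f *v (spectral_sum U g *v x) = spectral_sum U (\<lambda>u. f u * g u) *v x" for x
    unfolding spectral_sum_matrix_vector[of U f] spectral_sum_matrix_vector[of U "\<lambda>u. f u * g u"]
    by (rule sum.cong) (simp_all add: spectral_sum_matrix_vector cinner_orthonormal_sum[OF assms]
        mult.assoc)
  then show ?thesis by (simp add: matrix_eq matrix_vector_mul_assoc)
qed

lemma hermitian_spectral_decomposition:
  assumes "hermitian H"
  obtains U l where "orthonormal_set U" "\<forall>u\<in>U. H *v u = complex_of_real (l u) *s u"
    "spectral_sum U (\<lambda>_. 1) = mat 1" "spectral_sum U l = H"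
proof -
  obtain U where U: "orthonormal_set U"
    and eig: "\<forall>u\<in>U. \<exists>l::real. H *v u = complex_of_real l *s u"
    and expand: "\<And>x. (\<Sum>u\<in>U. cinner u x *s u) = x"
    using hermitian_orthonormal_eigenbasis[OF assms] by blast
  define l where "l u = Re (qform H u)" for u
  have Hu: "H *v u = complex_of_real (l u) *s u" if uU: "u \<in> U" for u
  proof -
    obtain c where c: "H *v u = complex_of_real c *s u" using eig uU by blast
    have "cinner u u = 1" using U uU by (simp add: orthonormal_set_def)
    then have "l u = c" by (simp add: l_def qform_eq_cinner c cinner_scale_right)
    with c show ?thesis by simp
  qed
  have "spectral_sum U (\<lambda>_. 1) *v x = mat 1 *v x" for x
    using expand[of x] by (simp add: spectral_sum_matrix_vector)
  moreover have "spectral_sum U l *v x = H *v x" for x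
  proof -
    have "H *v x = H *v (\<Sum>u\<in>U. cinner u x *s u)" by (simp only: expand)
    also have "\<dots> = (\<Sum>u\<in>U. (complex_of_real (l u) * cinner u x) *s u)"
      by (simp add: matrix_vector_sum matrix_vector_mult_scale Hu vector_smult_assoc mult.commute)
    finally show ?thesis by (simp add: spectral_sum_matrix_vector)
  qed
  ultimately show thesis using U Hu by (intro that[of U l]) (simp_all add: matrix_eq)
qed

section \<open>Square roots\<close>

lemma not_psd_imp_negative_eigenvector:
  assumes "hermitian D" "\<not> psd D"
  obtains u l where "cinner u u = 1" "l < 0" "D *v u = complex_of_real l *s u"
proof -
  obtain U l where U: "orthonormal_set U" and eig: "\<forall>u\<in>U. D *v u = complex_of_real (l u) *s u"
    and D: "spectral_sum U l = D"
    using hermitian_spectral_decomposition[OF assms(1)] by blast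
  have "\<exists>u\<in>U. l u < 0"
  proof (rule ccontr)
    assume "\<not> (\<exists>u\<in>U. l u < 0)"
    then have "psd (spectral_sum U l)" by (intro psd_spectral_sum) (simp add: not_less)
    with D assms(2) show False by simp
  qed
  then obtain u where "u \<in> U" "l u < 0" by blast
  with U eig show thesis by (intro that[of u "l u"]) (auto simp: orthonormal_set_def)
qed

text \<open>If \<open>S \<le> Y\<close> fails, take a unit eigenvector \<open>u\<close>
  of \<open>Y - S\<close> with eigenvalue \<open>l < 0\<close> and put \<open>s = \<langle>u, S u\<rangle> \<ge> 0\<close>; then
  \<open>\<langle>u, (Y\<^sup>2 - S\<^sup>2) u\<rangle> = l (2 s + l)\<close> and \<open>\<langle>u, Y u\<rangle> = s + l\<close> cannot both be nonnegative.\<close>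

lemma psd_square_le_imp_le:
  assumes pS: "psd S" and pY: "psd Y" and le: "S ** S \<le>\<^sub>L Y ** Y"
  shows "S \<le>\<^sub>L Y"
proof (rule ccontr)
  have hS: "hermitian S" and hY: "hermitian Y" using pS pY by (auto simp: psd_imp_hermitian)
  assume "\<not> S \<le>\<^sub>L Y"
  then obtain u l where uu: "cinner u u = 1" and neg: "l < 0"
    and eig: "(Y - S) *v u = complex_of_real l *s u"
    using not_psd_imp_negative_eigenvector[of "Y - S"] hermitian_diff[OF hY hS]
    by (auto simp: loewner_le_def)
  have Yu: "Y *v u = S *v u + complex_of_real l *s u"
    using eig by (simp add: matrix_vector_mult_diff_rdistrib algebra_simps)
  define s where "s = Re (qform S u)"
  have Su: "cinner u (S *v u) = complex_of_real s" "cinner (S *v u) u = complex_of_real s"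
    using psd_qform_real[OF pS, of u] by (simp_all add: s_def qform_eq_cinner flip: hermitian_cinner[OF hS])
  have "qform (Y ** Y - S ** S) u = cinner (Y *v u) (Y *v u) - cinner (S *v u) (S *v u)"
    by (simp add: qform_diff qform_mult hermitian_cinner[OF hY] hermitian_cinner[OF hS])
  also have "\<dots> = complex_of_real (l * (2 * s + l))"
    using Su by (simp add: Yu cinner_add_left cinner_add_right cinner_scale_left cinner_scale_right
        uu algebra_simps)
  finally have "0 \<le> l * (2 * s + l)"
    using le unfolding loewner_le_def psd_def by (metis Re_complex_of_real)
  then have "2 * s + l \<le> 0" using neg by (simp add: zero_le_mult_iff)
  moreover have "qform Y u = complex_of_real (s + l)"
    using Su by (simp add: qform_eq_cinner Yu cinner_add_right cinner_scale_right uu)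
  then have "0 \<le> s + l" using pY unfolding psd_def by (metis Re_complex_of_real)
  moreover have "0 \<le> s" using pS by (simp add: s_def psd_def)
  ultimately show False using neg by linarith
qed

lemma psd_sqrt_exists:
  assumes "psd X"
  shows "\<exists>S. psd S \<and> S ** S = X"
proof -
  obtain U l where U: "orthonormal_set U" and eig: "\<forall>u\<in>U. X *v u = complex_of_real (l u) *s u"
    and X: "spectral_sum U l = X"
    using hermitian_spectral_decomposition[OF psd_imp_hermitian[OF assms]] by blast
  have l: "0 \<le> l u" if "u \<in> U" for u
  proof -
    have "qform X u = complex_of_real (l u)"
      using U eig that by (simp add: qform_eq_cinner cinner_scale_right orthonormal_set_def)
    then show ?thesis using assms by (metis psd_def Re_complex_of_real)
  qed
  let ?S = "spectral_sum U (\<lambda>u. sqrt (l u))"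
  have "?S ** ?S = spectral_sum U (\<lambda>u. sqrt (l u) * sqrt (l u))"
    by (rule spectral_sum_mult[OF U])
  also have "\<dots> = spectral_sum U l"
    unfolding spectral_sum_def by (rule sum.cong) (simp_all add: l)
  finally have "?S ** ?S = spectral_sum U l" .
  with X l show ?thesis by (metis psd_spectral_sum real_sqrt_ge_zero)
qed

lemma psd_sqrt_unique: "psd S \<Longrightarrow> psd T \<Longrightarrow> S ** S = T ** T \<Longrightarrow> S = T"
  by (metis loewner_le_antisym loewner_le_refl psd_square_le_imp_le)

lemma
  assumes "psd X"
  shows psd_msqrt: "psd (msqrt X)" and msqrt_square: "msqrt X ** msqrt X = X"
proof -
  have "\<exists>!S. psd S \<and> S ** S = X"
    using psd_sqrt_exists[OF assms] psd_sqrt_unique by blast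
  then have "psd (msqrt X) \<and> msqrt X ** msqrt X = X" unfolding msqrt_def by (rule theI')
  then show "psd (msqrt X)" "msqrt X ** msqrt X = X" by auto
qed

lemma msqrt_le: "psd X \<Longrightarrow> psd Y \<Longrightarrow> X \<le>\<^sub>L Y ** Y \<Longrightarrow> msqrt X \<le>\<^sub>L Y"
  by (metis psd_msqrt msqrt_square psd_square_le_imp_le)

lemma le_msqrt: "psd X \<Longrightarrow> psd Y \<Longrightarrow> Y ** Y \<le>\<^sub>L X \<Longrightarrow> Y \<le>\<^sub>L msqrt X"
  by (metis psd_msqrt msqrt_square psd_square_le_imp_le)

section \<open>Completing the square\<close>

lemma square_completion_scaled:
  assumes "hermitian a"
  shows "complex_of_real (2 * c * d) *\<^sub>M a - mat (complex_of_real (d^2)) \<le>\<^sub>L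
    (complex_of_real c *\<^sub>M a) ** (complex_of_real c *\<^sub>M a)"
  unfolding loewner_le_def
proof (rule psd_if_qform_cinner_self)
  fix x
  let ?c = "complex_of_real c" and ?d = "complex_of_real d"
  have sq: "qform ((?c *\<^sub>M a) ** (?c *\<^sub>M a)) x = ?c * ?c * cinner (a *v x) (a *v x)"
    by (simp add: qform_mult cmat_scale_matrix_vector matrix_vector_mult_scale cinner_scale_right
        hermitian_cinner[OF assms])
  have "qform ((?c *\<^sub>M a) ** (?c *\<^sub>M a) -
      (complex_of_real (2 * c * d) *\<^sub>M a - mat (complex_of_real (d^2)))) x
    = ?c * ?c * cinner (a *v x) (a *v x) - (2 * ?c * ?d * cinner x (a *v x) - ?d * ?d * cinner x x)"
    by (simp only: qform_diff qform_scale qform_mat sq qform_eq_cinner[of a])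
      (simp add: power2_eq_square)
  also have "\<dots> = cinner (?c *s (a *v x) - ?d *s x) (?c *s (a *v x) - ?d *s x)"
    by (simp add: cinner_scale_left cinner_scale_right cinner_diff_left cinner_diff_right
        hermitian_cinner[OF assms] matrix_vector_mult_scale algebra_simps)
  finally show "qform ((?c *\<^sub>M a) ** (?c *\<^sub>M a) -
      (complex_of_real (2 * c * d) *\<^sub>M a - mat (complex_of_real (d^2)))) x
    = cinner (?c *s (a *v x) - ?d *s x) (?c *s (a *v x) - ?d *s x)" .
qed

lemma square_completion_shifted:
  assumes "hermitian a"
  shows "complex_of_real (2 * (g + h)) *\<^sub>M a - mat (complex_of_real (h^2 - g^2)) \<le>\<^sub>L
    (a + mat (complex_of_real g)) ** (a + mat (complex_of_real g))"
  unfolding loewner_le_def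
proof (rule psd_if_qform_cinner_self)
  fix x
  let ?g = "complex_of_real g" and ?h = "complex_of_real h"
  have "hermitian (a + mat ?g)" by (simp add: assms hermitian_add hermitian_mat)
  moreover have "(a + mat ?g) *v x = a *v x + ?g *s x"
    by (simp add: matrix_vector_mult_add_rdistrib mat_matrix_vector)
  ultimately have sq: "qform ((a + mat ?g) ** (a + mat ?g)) x =
      cinner (a *v x + ?g *s x) (a *v x + ?g *s x)"
    by (simp only: qform_mult hermitian_cinner)
  have "qform ((a + mat ?g) ** (a + mat ?g) -
      (complex_of_real (2 * (g + h)) *\<^sub>M a - mat (complex_of_real (h^2 - g^2)))) x
    = cinner (a *v x + ?g *s x) (a *v x + ?g *s x)
      - (2 * (?g + ?h) * cinner x (a *v x) - (?h * ?h - ?g * ?g) * cinner x x)"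
    by (simp only: qform_diff qform_scale qform_mat sq qform_eq_cinner[of a])
      (simp add: power2_eq_square)
  also have "\<dots> = cinner (a *v x - ?h *s x) (a *v x - ?h *s x)"
    by (simp add: cinner_scale_left cinner_scale_right cinner_diff_left cinner_diff_right
        cinner_add_left cinner_add_right hermitian_cinner[OF assms] matrix_vector_mult_scale
        algebra_simps)
  finally show "qform ((a + mat ?g) ** (a + mat ?g) -
      (complex_of_real (2 * (g + h)) *\<^sub>M a - mat (complex_of_real (h^2 - g^2)))) x
    = cinner (a *v x - ?h *s x) (a *v x - ?h *s x)" .
qed

lemma msqrt_le_scaled:
  assumes "0 < m" "0 < M" "psd a" "psd P"
    and P: "P \<le>\<^sub>L complex_of_real (M + m) *\<^sub>M a - mat (complex_of_real (M * m))"
  shows "msqrt P \<le>\<^sub>L complex_of_real ((M + m) / (2 * sqrt (M * m))) *\<^sub>M a"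
proof (rule msqrt_le[OF \<open>psd P\<close> psd_scale[OF _ \<open>psd a\<close>]])
  define c where "c = (M + m) / (2 * sqrt (M * m))"
  define d where "d = sqrt (M * m)"
  have "2 * c * d = M + m" "d^2 = M * m" using assms(1,2) by (simp_all add: c_def d_def)
  then have "P \<le>\<^sub>L complex_of_real (2 * c * d) *\<^sub>M a - mat (complex_of_real (d^2))"
    using P by simp
  also have "\<dots> \<le>\<^sub>L (complex_of_real c *\<^sub>M a) ** (complex_of_real c *\<^sub>M a)"
    by (rule square_completion_scaled[OF psd_imp_hermitian[OF \<open>psd a\<close>]])
  finally show "P \<le>\<^sub>L (complex_of_real c *\<^sub>M a) ** (complex_of_real c *\<^sub>M a)" .
  show "0 \<le> (M + m) / (2 * sqrt (M * m))" using assms(1,2) by simp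
qed

lemma msqrt_le_shifted:
  assumes "0 < M + m" "psd a" "psd P"
    and P: "P \<le>\<^sub>L complex_of_real (M + m) *\<^sub>M a - mat (complex_of_real (M * m))"
  shows "msqrt P \<le>\<^sub>L a + mat (complex_of_real ((M - m)^2 / (4 * (M + m))))"
proof (rule msqrt_le[OF \<open>psd P\<close> psd_add[OF \<open>psd a\<close> psd_mat]])
  define g where "g = (M - m)^2 / (4 * (M + m))"
  define h where "h = (M + m) / 2 - g"
  have "2 * (g + h) = M + m" by (simp add: h_def)
  moreover have "h^2 - g^2 = M * m"
  proof -
    have "h^2 - g^2 = ((M + m)^2 - 4 * (M + m) * g) / 4"
      by (simp add: h_def power2_eq_square field_simps)
    also have "4 * (M + m) * g = (M - m)^2" using assms(1) by (simp add: g_def)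
    finally show ?thesis by (simp add: power2_eq_square algebra_simps)
  qed
  ultimately have "P \<le>\<^sub>L complex_of_real (2 * (g + h)) *\<^sub>M a - mat (complex_of_real (h^2 - g^2))"
    using P by simp
  also have "\<dots> \<le>\<^sub>L (a + mat (complex_of_real g)) ** (a + mat (complex_of_real g))"
    by (rule square_completion_shifted[OF psd_imp_hermitian[OF \<open>psd a\<close>]])
  finally show "P \<le>\<^sub>L (a + mat (complex_of_real g)) ** (a + mat (complex_of_real g))" .
  show "0 \<le> (M - m)^2 / (4 * (M + m))" using assms(1) by simp
qed

section \<open>Sums of positive linear maps\<close>

lemma clinear_map_zero: "clinear_map \<Phi> \<Longrightarrow> \<Phi> 0 = 0"
  unfolding clinear_map_def by (metis cmat_scale_zero)

lemma clinear_map_sum: "clinear_map \<Phi> \<Longrightarrow> \<Phi> (sum g S) = (\<Sum>j\<in>S. \<Phi> (g j))"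
  by (induction S rule: infinite_finite_induct) (auto simp: clinear_map_zero clinear_map_def)

lemma clinear_map_spectral_sum:
  "clinear_map \<Phi> \<Longrightarrow> \<Phi> (spectral_sum U f) = (\<Sum>u\<in>U. complex_of_real (f u) *\<^sub>M \<Phi> (outer u u))"
  by (simp add: spectral_sum_def clinear_map_sum clinear_map_def)

lemma sum_clinear_maps_spectral_sums:
  assumes "finite I" "\<And>i. i \<in> I \<Longrightarrow> clinear_map (\<Phi> i)" "\<And>i. i \<in> I \<Longrightarrow> orthonormal_set (U i)"
  shows "(\<Sum>i\<in>I. \<Phi> i (spectral_sum (U i) (g i))) =
    (\<Sum>(i, u)\<in>Sigma I U. complex_of_real (g i u) *\<^sub>M \<Phi> i (outer u u))"
proof -
  have "(\<Sum>i\<in>I. \<Phi> i (spectral_sum (U i) (g i))) =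
      (\<Sum>i\<in>I. \<Sum>u\<in>U i. complex_of_real (g i u) *\<^sub>M \<Phi> i (outer u u))"
    using assms(2) by (simp add: clinear_map_spectral_sum)
  also have "\<dots> = (\<Sum>(i, u)\<in>Sigma I U. complex_of_real (g i u) *\<^sub>M \<Phi> i (outer u u))"
    using assms(1,3) orthonormal_set_finite_card by (subst sum.Sigma) auto
  finally show ?thesis .
qed

text \<open>Here \<open>Q\<^sub>j = \<Phi>\<^sub>i (outer u u)\<close> for the unit eigenvectors \<open>u\<close> of \<open>X\<^sub>i\<close>, and \<open>l\<^sub>j\<close> is the
  eigenvalue of \<open>u\<close>.\<close>

lemma positive_maps_spectral_decomposition:
  fixes X :: "'i \<Rightarrow> ('n::finite) cmat" and \<Phi> :: "'i \<Rightarrow> 'n cmat \<Rightarrow> ('r::finite) cmat"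
  assumes "finite I" "\<And>i. i \<in> I \<Longrightarrow> hermitian (X i)"
    and maps: "\<And>i. i \<in> I \<Longrightarrow> clinear_map (\<Phi> i) \<and> positive_map (\<Phi> i)"
  obtains J :: "('i \<times> (complex^'n)) set" and Q l where
    "\<And>j. j \<in> J \<Longrightarrow> psd (Q j)"
    "(\<Sum>i\<in>I. \<Phi> i (mat 1)) = (\<Sum>j\<in>J. Q j)"
    "(\<Sum>i\<in>I. \<Phi> i (X i)) = (\<Sum>j\<in>J. complex_of_real (l j) *\<^sub>M Q j)"
    "(\<Sum>i\<in>I. \<Phi> i (X i ** X i)) = (\<Sum>j\<in>J. complex_of_real ((l j)^2) *\<^sub>M Q j)"
    "\<And>j. j \<in> J \<Longrightarrow> \<exists>i\<in>I. \<exists>u. cinner u u = 1 \<and> l j = Re (qform (X i) u)"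
proof -
  have "\<forall>i\<in>I. \<exists>U f. orthonormal_set U \<and> (\<forall>u\<in>U. X i *v u = complex_of_real (f u) *s u) \<and>
      spectral_sum U (\<lambda>_. 1) = mat 1 \<and> spectral_sum U f = X i"
    by (metis assms(2) hermitian_spectral_decomposition)
  then obtain U f where U: "\<And>i. i \<in> I \<Longrightarrow> orthonormal_set (U i)"
    and eig: "\<And>i u. i \<in> I \<Longrightarrow> u \<in> U i \<Longrightarrow> X i *v u = complex_of_real (f i u) *s u"
    and one: "\<And>i. i \<in> I \<Longrightarrow> spectral_sum (U i) (\<lambda>_. 1) = mat 1"
    and Xi: "\<And>i. i \<in> I \<Longrightarrow> spectral_sum (U i) (f i) = X i"
    by metis
  define J where "J = Sigma I U"
  define Q where "Q = (\<lambda>(i, u). \<Phi> i (outer u u))"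
  have moments: "(\<Sum>i\<in>I. \<Phi> i (spectral_sum (U i) (g i))) =
      (\<Sum>j\<in>J. complex_of_real (case_prod g j) *\<^sub>M Q j)" for g
    using sum_clinear_maps_spectral_sums[OF assms(1) _ U, where \<Phi> = \<Phi> and g = g] maps
    by (simp add: J_def Q_def split_def)
  show thesis
  proof (rule that[of J Q "case_prod f"])
    show "psd (Q j)" if "j \<in> J" for j
      using that maps psd_outer by (auto simp: J_def Q_def positive_map_def)
    show "(\<Sum>i\<in>I. \<Phi> i (mat 1)) = (\<Sum>j\<in>J. Q j)"
      using moments[of "\<lambda>_ _. 1"] one by (simp add: cmat_scale_one)
    show "(\<Sum>i\<in>I. \<Phi> i (X i)) = (\<Sum>j\<in>J. complex_of_real (case_prod f j) *\<^sub>M Q j)"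
      using moments[of f] Xi by simp
    have "X i ** X i = spectral_sum (U i) (\<lambda>u. (f i u)^2)" if "i \<in> I" for i
      using spectral_sum_mult[OF U[OF that], of "f i" "f i"] Xi[OF that]
      by (simp add: power2_eq_square)
    then show "(\<Sum>i\<in>I. \<Phi> i (X i ** X i)) =
        (\<Sum>j\<in>J. complex_of_real ((case_prod f j)^2) *\<^sub>M Q j)"
      using moments[of "\<lambda>i u. (f i u)^2"] by (simp add: split_def)
    show "\<exists>i\<in>I. \<exists>u. cinner u u = 1 \<and> case_prod f j = Re (qform (X i) u)" if jJ: "j \<in> J" for j
    proof -
      obtain i u where j: "j = (i, u)" "i \<in> I" "u \<in> U i" using jJ by (auto simp: J_def)
      then have uu: "cinner u u = 1" using U by (simp add: orthonormal_set_def)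
      then have "Re (qform (X i) u) = f i u"
        using eig[OF j(2,3)] by (simp add: qform_eq_cinner cinner_scale_right)
      with j uu show ?thesis by (metis case_prod_conv)
    qed
  qed
qed

lemma qform_weighted_sum:
  "qform (\<Sum>j\<in>J. complex_of_real (l j) *\<^sub>M Q j) x = (\<Sum>j\<in>J. complex_of_real (l j) * qform (Q j) x)"
  by (simp add: qform_sum qform_scale)

lemma hermitian_weighted_sum:
  "(\<And>j. j \<in> J \<Longrightarrow> hermitian (Q j)) \<Longrightarrow> hermitian (\<Sum>j\<in>J. complex_of_real (l j) *\<^sub>M Q j)"
  by (simp add: hermitian_iff_qform_real qform_weighted_sum Im_sum)

text \<open>Kadison's inequality for the commutative situation at hand: since \<open>\<Sum>\<^sub>j Q\<^sub>j = I\<close>,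
  \<open>\<Sum>\<^sub>j l\<^sub>j\<^sup>2 Q\<^sub>j - a\<^sup>2 = \<Sum>\<^sub>j (l\<^sub>j I - a) Q\<^sub>j (l\<^sub>j I - a)\<close> for \<open>a = \<Sum>\<^sub>j l\<^sub>j Q\<^sub>j\<close>.\<close>

lemma weighted_sum_square_le:
  assumes pQ: "\<And>j. j \<in> J \<Longrightarrow> psd (Q j)" and one: "(\<Sum>j\<in>J. Q j) = mat 1"
  shows "(\<Sum>j\<in>J. complex_of_real (l j) *\<^sub>M Q j) ** (\<Sum>j\<in>J. complex_of_real (l j) *\<^sub>M Q j)
    \<le>\<^sub>L (\<Sum>j\<in>J. complex_of_real ((l j)^2) *\<^sub>M Q j)"
proof -
  define a where "a = (\<Sum>j\<in>J. complex_of_real (l j) *\<^sub>M Q j)"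
  let ?p = "\<Sum>j\<in>J. complex_of_real ((l j)^2) *\<^sub>M Q j"
  have ha: "hermitian a" unfolding a_def by (rule hermitian_weighted_sum) (simp add: pQ psd_imp_hermitian)
  have "qform (?p - a ** a) x = (\<Sum>j\<in>J. qform (Q j) (complex_of_real (l j) *s x - a *v x))" for x
  proof -
    define y where "y = a *v x"
    have "(\<Sum>j\<in>J. complex_of_real (l j) * cinner x (Q j *v y)) = cinner x (a *v y)"
      by (simp add: a_def sum_matrix_vector cmat_scale_matrix_vector cinner_sum_right
          cinner_scale_right)
    then have lQy: "(\<Sum>j\<in>J. complex_of_real (l j) * cinner x (Q j *v y)) = cinner y y"
      by (simp add: y_def hermitian_cinner[OF ha])
    have "(\<Sum>j\<in>J. complex_of_real (l j) * cinner y (Q j *v x)) = cinner y (a *v x)"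
      by (simp add: a_def sum_matrix_vector cmat_scale_matrix_vector cinner_sum_right
          cinner_scale_right)
    then have lQx: "(\<Sum>j\<in>J. complex_of_real (l j) * cinner y (Q j *v x)) = cinner y y"
      by (simp add: y_def)
    have Qy: "(\<Sum>j\<in>J. cinner y (Q j *v y)) = cinner y y"
      using arg_cong[OF one, of "\<lambda>A. cinner y (A *v y)"] by (simp add: sum_matrix_vector cinner_sum_right)
    have "(\<Sum>j\<in>J. qform (Q j) (complex_of_real (l j) *s x - y)) =
        (\<Sum>j\<in>J. complex_of_real ((l j)^2) * qform (Q j) x)
        - (\<Sum>j\<in>J. complex_of_real (l j) * cinner x (Q j *v y))
        - (\<Sum>j\<in>J. complex_of_real (l j) * cinner y (Q j *v x)) + (\<Sum>j\<in>J. cinner y (Q j *v y))"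
      by (simp add: qform_eq_cinner matrix_vector_mult_diff_distrib
          matrix_vector_mult_scale cinner_diff_left cinner_diff_right cinner_scale_left
          cinner_scale_right sum.distrib sum_subtractf algebra_simps power2_eq_square)
    also have "\<dots> = qform (?p - a ** a) x"
      by (simp add: lQy lQx Qy qform_diff qform_mult qform_sum qform_scale hermitian_cinner[OF ha]
          flip: y_def)
    finally show ?thesis by (simp add: y_def)
  qed
  then have "psd (?p - a ** a)"
    using pQ by (simp add: psd_def Re_sum Im_sum sum_nonneg)
  then show ?thesis by (simp add: loewner_le_def a_def)
qed

lemma weighted_sum_square_le_converse:
  assumes pQ: "\<And>j. j \<in> J \<Longrightarrow> psd (Q j)" and one: "(\<Sum>j\<in>J. Q j) = mat 1"
    and bounds: "\<And>j. j \<in> J \<Longrightarrow> m \<le> l j \<and> l j \<le> M"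
  shows "(\<Sum>j\<in>J. complex_of_real ((l j)^2) *\<^sub>M Q j) \<le>\<^sub>L
    complex_of_real (M + m) *\<^sub>M (\<Sum>j\<in>J. complex_of_real (l j) *\<^sub>M Q j) - mat (complex_of_real (M * m))"
proof -
  have "complex_of_real (M + m) *\<^sub>M (\<Sum>j\<in>J. complex_of_real (l j) *\<^sub>M Q j)
      - mat (complex_of_real (M * m)) - (\<Sum>j\<in>J. complex_of_real ((l j)^2) *\<^sub>M Q j)
      = (\<Sum>j\<in>J. complex_of_real ((M - l j) * (l j - m)) *\<^sub>M Q j)"
  proof (subst matrix_eq_iff_qform, intro allI)
    fix x
    let ?q = "\<lambda>j. qform (Q j) x"
    have "cinner x x = (\<Sum>j\<in>J. ?q j)"
      using qform_mat[of 1 x] by (simp add: one[symmetric] qform_sum)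
    then have "qform (complex_of_real (M + m) *\<^sub>M (\<Sum>j\<in>J. complex_of_real (l j) *\<^sub>M Q j)
        - mat (complex_of_real (M * m)) - (\<Sum>j\<in>J. complex_of_real ((l j)^2) *\<^sub>M Q j)) x
      = complex_of_real (M + m) * (\<Sum>j\<in>J. complex_of_real (l j) * ?q j)
        - complex_of_real (M * m) * (\<Sum>j\<in>J. ?q j) - (\<Sum>j\<in>J. complex_of_real ((l j)^2) * ?q j)"
      by (simp only: qform_diff qform_scale qform_mat qform_weighted_sum)
    also have "\<dots> = (\<Sum>j\<in>J. complex_of_real (M + m) * (complex_of_real (l j) * ?q j)
        - complex_of_real (M * m) * ?q j - complex_of_real ((l j)^2) * ?q j)"
      by (simp only: sum_distrib_left sum_subtractf)
    also have "\<dots> = (\<Sum>j\<in>J. complex_of_real ((M - l j) * (l j - m)) * ?q j)"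
      by (rule sum.cong) (simp_all add: algebra_simps power2_eq_square)
    also have "\<dots> = qform (\<Sum>j\<in>J. complex_of_real ((M - l j) * (l j - m)) *\<^sub>M Q j) x"
      by (simp only: qform_weighted_sum)
    finally show "qform (complex_of_real (M + m) *\<^sub>M (\<Sum>j\<in>J. complex_of_real (l j) *\<^sub>M Q j)
        - mat (complex_of_real (M * m)) - (\<Sum>j\<in>J. complex_of_real ((l j)^2) *\<^sub>M Q j)) x
      = qform (\<Sum>j\<in>J. complex_of_real ((M - l j) * (l j - m)) *\<^sub>M Q j) x" .
  qed
  moreover have "psd (\<Sum>j\<in>J. complex_of_real ((M - l j) * (l j - m)) *\<^sub>M Q j)"
    using bounds pQ by (intro psd_sum psd_scale) auto
  ultimately show ?thesis by (simp add: loewner_le_def)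
qed

lemma positive_maps_square_le:
  fixes X :: "'i \<Rightarrow> ('n::finite) cmat" and \<Phi> :: "'i \<Rightarrow> 'n cmat \<Rightarrow> ('r::finite) cmat"
  assumes "finite I" "\<And>i. i \<in> I \<Longrightarrow> hermitian (X i)"
    and "\<And>i. i \<in> I \<Longrightarrow> clinear_map (\<Phi> i) \<and> positive_map (\<Phi> i)"
    and "(\<Sum>i\<in>I. \<Phi> i (mat 1)) = mat 1"
  shows "(\<Sum>i\<in>I. \<Phi> i (X i)) ** (\<Sum>i\<in>I. \<Phi> i (X i)) \<le>\<^sub>L (\<Sum>i\<in>I. \<Phi> i (X i ** X i))"
proof (rule positive_maps_spectral_decomposition[OF assms(1-3)])
  fix J :: "('i \<times> (complex^'n)) set" and Q l
  assume "\<And>j. j \<in> J \<Longrightarrow> psd (Q j)" "(\<Sum>i\<in>I. \<Phi> i (mat 1)) = (\<Sum>j\<in>J. Q j)"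
    "(\<Sum>i\<in>I. \<Phi> i (X i)) = (\<Sum>j\<in>J. complex_of_real (l j) *\<^sub>M Q j)"
    "(\<Sum>i\<in>I. \<Phi> i (X i ** X i)) = (\<Sum>j\<in>J. complex_of_real ((l j)^2) *\<^sub>M Q j)"
  with assms(4) show ?thesis using weighted_sum_square_le[of J Q l] by simp
qed

lemma positive_maps_square_le_converse:
  fixes X :: "'i \<Rightarrow> ('n::finite) cmat" and \<Phi> :: "'i \<Rightarrow> 'n cmat \<Rightarrow> ('r::finite) cmat"
  assumes "finite I"
    and bounds: "\<And>i. i \<in> I \<Longrightarrow> mat (complex_of_real m) \<le>\<^sub>L X i \<and> X i \<le>\<^sub>L mat (complex_of_real M)"
    and maps: "\<And>i. i \<in> I \<Longrightarrow> clinear_map (\<Phi> i) \<and> positive_map (\<Phi> i)"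
    and one: "(\<Sum>i\<in>I. \<Phi> i (mat 1)) = mat 1"
  shows "(\<Sum>i\<in>I. \<Phi> i (X i ** X i)) \<le>\<^sub>L
    complex_of_real (M + m) *\<^sub>M (\<Sum>i\<in>I. \<Phi> i (X i)) - mat (complex_of_real (M * m))"
proof -
  have "hermitian (X i)" if "i \<in> I" for i using bounds[OF that] hermitian_if_mat_le by blast
  then show ?thesis
  proof (rule positive_maps_spectral_decomposition[OF assms(1) _ maps])
    fix J :: "('i \<times> (complex^'n)) set" and Q l
    assume "\<And>j. j \<in> J \<Longrightarrow> psd (Q j)" "(\<Sum>i\<in>I. \<Phi> i (mat 1)) = (\<Sum>j\<in>J. Q j)"
      "(\<Sum>i\<in>I. \<Phi> i (X i)) = (\<Sum>j\<in>J. complex_of_real (l j) *\<^sub>M Q j)"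
      "(\<Sum>i\<in>I. \<Phi> i (X i ** X i)) = (\<Sum>j\<in>J. complex_of_real ((l j)^2) *\<^sub>M Q j)"
      and eig: "\<And>j. j \<in> J \<Longrightarrow> \<exists>i\<in>I. \<exists>u. cinner u u = 1 \<and> l j = Re (qform (X i) u)"
    moreover have "m \<le> l j \<and> l j \<le> M" if "j \<in> J" for j
      using eig[OF that] bounds qform_between_mat_bounds by metis
    ultimately show ?thesis using one weighted_sum_square_le_converse[of J Q m l M] by simp
  qed
qed

lemma psd_sum_positive_maps:
  "(\<And>i. i \<in> I \<Longrightarrow> positive_map (\<Phi> i) \<and> psd (Y i)) \<Longrightarrow> psd (\<Sum>i\<in>I. \<Phi> i (Y i))"
  by (intro psd_sum) (simp add: positive_map_def)

lemma positive_maps_msqrt_bounds: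
  fixes X :: "'i \<Rightarrow> ('n::finite) cmat" and \<Phi> :: "'i \<Rightarrow> 'n cmat \<Rightarrow> ('r::finite) cmat"
  assumes "finite I" "0 < m" "m \<le> M"
    and bounds: "\<And>i. i \<in> I \<Longrightarrow> mat (complex_of_real m) \<le>\<^sub>L X i \<and> X i \<le>\<^sub>L mat (complex_of_real M)"
    and maps: "\<And>i. i \<in> I \<Longrightarrow> clinear_map (\<Phi> i) \<and> positive_map (\<Phi> i)"
    and "(\<Sum>i\<in>I. \<Phi> i (mat 1)) = mat 1"
  shows "psd (\<Sum>i\<in>I. \<Phi> i (X i))"
    and "msqrt (\<Sum>i\<in>I. \<Phi> i (X i ** X i)) \<le>\<^sub>L
      complex_of_real ((M + m) / (2 * sqrt (M * m))) *\<^sub>M (\<Sum>i\<in>I. \<Phi> i (X i))"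
    and "msqrt (\<Sum>i\<in>I. \<Phi> i (X i ** X i)) \<le>\<^sub>L
      (\<Sum>i\<in>I. \<Phi> i (X i)) + mat (complex_of_real ((M - m)^2 / (4 * (M + m))))"
proof -
  have X: "psd (X i)" if "i \<in> I" for i
    using bounds[OF that] assms(2) psd_if_mat_le[of m "X i"] by simp
  then show a: "psd (\<Sum>i\<in>I. \<Phi> i (X i))"
    using maps by (intro psd_sum_positive_maps) simp
  have P2: "psd (\<Sum>i\<in>I. \<Phi> i (X i ** X i))"
    using X maps by (intro psd_sum_positive_maps) (simp add: psd_square psd_imp_hermitian)
  have P: "(\<Sum>i\<in>I. \<Phi> i (X i ** X i)) \<le>\<^sub>L
      complex_of_real (M + m) *\<^sub>M (\<Sum>i\<in>I. \<Phi> i (X i)) - mat (complex_of_real (M * m))"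
    using assms(1) bounds maps assms(6) by (rule positive_maps_square_le_converse)
  show "msqrt (\<Sum>i\<in>I. \<Phi> i (X i ** X i)) \<le>\<^sub>L
      complex_of_real ((M + m) / (2 * sqrt (M * m))) *\<^sub>M (\<Sum>i\<in>I. \<Phi> i (X i))"
    using assms(2,3) by (intro msqrt_le_scaled[OF _ _ a P2 P]) auto
  show "msqrt (\<Sum>i\<in>I. \<Phi> i (X i ** X i)) \<le>\<^sub>L
      (\<Sum>i\<in>I. \<Phi> i (X i)) + mat (complex_of_real ((M - m)^2 / (4 * (M + m))))"
    using assms(2,3) by (intro msqrt_le_shifted[OF _ a P2 P]) auto
qed

lemma positive_maps_le_msqrt:
  fixes X :: "'i \<Rightarrow> ('n::finite) cmat" and \<Phi> :: "'i \<Rightarrow> 'n cmat \<Rightarrow> ('r::finite) cmat"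
  assumes "finite I" "\<And>i. i \<in> I \<Longrightarrow> hermitian (X i)"
    and maps: "\<And>i. i \<in> I \<Longrightarrow> clinear_map (\<Phi> i) \<and> positive_map (\<Phi> i)"
    and "(\<Sum>i\<in>I. \<Phi> i (mat 1)) = mat 1" "psd (\<Sum>i\<in>I. \<Phi> i (X i))"
  shows "(\<Sum>i\<in>I. \<Phi> i (X i)) \<le>\<^sub>L msqrt (\<Sum>i\<in>I. \<Phi> i (X i ** X i))"
proof (rule le_msqrt[OF _ assms(5) positive_maps_square_le[OF assms(1-4)]])
  show "psd (\<Sum>i\<in>I. \<Phi> i (X i ** X i))"
    using assms(2) maps by (intro psd_sum_positive_maps) (simp add: psd_square)
qed

theorem mainTheorem8:
  fixes A B :: "nat \<Rightarrow> ('n::finite) cmat"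
    and \<Phi> :: "nat \<Rightarrow> 'n cmat \<Rightarrow> ('r::finite) cmat"
    and k :: nat and m M :: real
  assumes "0 < m" and "m < M"
    and "\<And>i. i \<in> {1..k} \<Longrightarrow> hermitian (A i) \<and> hermitian (B i)"
    and "\<And>i. i \<in> {1..k} \<Longrightarrow> mat (complex_of_real m) \<le>\<^sub>L A i \<and> A i \<le>\<^sub>L mat (complex_of_real M)"
    and "\<And>i. i \<in> {1..k} \<Longrightarrow> mat (complex_of_real m) \<le>\<^sub>L B i \<and> B i \<le>\<^sub>L mat (complex_of_real M)"
    and "\<And>i. i \<in> {1..k} \<Longrightarrow> clinear_map (\<Phi> i) \<and> positive_map (\<Phi> i)"
    and "(\<Sum>i=1..k. \<Phi> i (mat 1)) = mat 1"
  shows "(msqrt (\<Sum>i=1..k. \<Phi> i (A i ** A i)) + msqrt (\<Sum>i=1..k. \<Phi> i (B i ** B i))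
           \<le>\<^sub>L complex_of_real ((M + m) / (2 * sqrt (M * m)))
                *\<^sub>M msqrt (\<Sum>i=1..k. \<Phi> i ((A i + B i) ** (A i + B i)))) \<and>
         (msqrt (\<Sum>i=1..k. \<Phi> i (A i ** A i)) + msqrt (\<Sum>i=1..k. \<Phi> i (B i ** B i))
           \<le>\<^sub>L mat (complex_of_real ((M - m)^2 / (2 * (M + m))))
                + msqrt (\<Sum>i=1..k. \<Phi> i ((A i + B i) ** (A i + B i))))"
proof -
  let ?a = "\<Sum>i=1..k. \<Phi> i (A i)" and ?b = "\<Sum>i=1..k. \<Phi> i (B i)"
    and ?PA = "\<Sum>i=1..k. \<Phi> i (A i ** A i)" and ?PB = "\<Sum>i=1..k. \<Phi> i (B i ** B i)"
    and ?R = "\<Sum>i=1..k. \<Phi> i ((A i + B i) ** (A i + B i))"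
  define c where "c = (M + m) / (2 * sqrt (M * m))"
  define g where "g = (M - m)^2 / (4 * (M + m))"
  have hyps: "finite {1..k}" "0 < m" "m \<le> M" using assms(1,2) by auto
  have A: "psd ?a" "msqrt ?PA \<le>\<^sub>L complex_of_real c *\<^sub>M ?a" "msqrt ?PA \<le>\<^sub>L ?a + mat (complex_of_real g)"
    using positive_maps_msqrt_bounds[OF hyps assms(4,6,7)] by (simp_all only: c_def g_def)
  have B: "psd ?b" "msqrt ?PB \<le>\<^sub>L complex_of_real c *\<^sub>M ?b" "msqrt ?PB \<le>\<^sub>L ?b + mat (complex_of_real g)"
    using positive_maps_msqrt_bounds[OF hyps assms(5,6,7)] by (simp_all only: c_def g_def)
  have "?a + ?b = (\<Sum>i=1..k. \<Phi> i (A i + B i))"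
    using assms(6) by (simp add: clinear_map_def flip: sum.distrib)
  then have sum: "?a + ?b \<le>\<^sub>L msqrt ?R"
    using psd_add[OF A(1) B(1)] assms(3,6,7)
    by (simp only:) (intro positive_maps_le_msqrt, auto simp: hermitian_add)
  have "msqrt ?PA + msqrt ?PB \<le>\<^sub>L complex_of_real c *\<^sub>M (?a + ?b)"
    using loewner_add_mono[OF A(2) B(2)] by (simp only: cmat_scale_add_right)
  also have "\<dots> \<le>\<^sub>L complex_of_real c *\<^sub>M msqrt ?R"
    using sum assms(1,2) by (intro loewner_scale_mono) (simp_all add: c_def)
  finally have scaled: "msqrt ?PA + msqrt ?PB \<le>\<^sub>L complex_of_real c *\<^sub>M msqrt ?R" .
  have "msqrt ?PA + msqrt ?PB \<le>\<^sub>L mat (complex_of_real (g + g)) + (?a + ?b)"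
    using loewner_add_mono[OF A(3) B(3)] by (simp only: of_real_add mat_add ac_simps)
  also have "\<dots> \<le>\<^sub>L mat (complex_of_real (g + g)) + msqrt ?R"
    by (rule loewner_add_mono[OF loewner_le_refl sum])
  finally have shifted: "msqrt ?PA + msqrt ?PB \<le>\<^sub>L mat (complex_of_real (g + g)) + msqrt ?R" .
  have "g + g = (M - m)^2 / (2 * (M + m))"
    by (simp add: g_def del: distrib_left_numeral)
  with scaled shifted show ?thesis by (simp only: c_def)
qed

end
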